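(* Let $\eta=10^{-4}$. There exist absolute constants $c_0,c_1,c_2>0$ such that the following holds for all integers $K\ge1$ and all $\epsilon$ with $c_0/K\le\epsilon\le c_1$. Let $n=2K$, and let $\mathcal F$ be the family of instances with $n$ arms in which every arm is a Bernoulli arm with mean in $\{1/2-\eta,\,1/2+\eta\}$. If an algorithm, on every instance in $\mathcal F$, outputs an $\epsilon$-top-$K$ set of arms with probability at least $0.9$, then there is an instance in $\mathcal F$ on which the expected number of pulls made by the algorithm is at least $c_2\, n\log(1/\epsilon)$.
   Context: Stochastic bandit model: arm $i$ has an unknown reward distribution with mean $\theta_i$; an algorithm adaptively pulls arms, each pull of arm $i$ giving an independent sample from its distribution, and finally outputs a set of arms. With arms indexed so that $\theta_1\ge\dots\ge\theta_n$, for $T\subseteq[n]$ with $|T|=K$ the aggregate regret is $\mathcal R_T=\frac1K(\sum_{i=1}^K\theta_i-\sum_{i\in T}\theta_i)$, and $T$ is an $\epsilon$-top-$K$ set if $|T|=K$ and $\mathcal R_T\le\epsilon$. *)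

theory Defs
  imports "HOL-Probability.Probability"
begin

text \<open>Arms are indexed 0..n-1. An instance is given by the vector of means theta.
  An (adaptive, possibly randomized) algorithm maps the history of pulls so far
  (list of (arm, observed reward)) to a distribution over its next action:
  pull an arm, or stop and output a set of arms.\<close>

datatype action = Pull nat | Stop "nat set"

type_synonym algorithm = "(nat \<times> bool) list \<Rightarrow> action pmf"

definition top_sum :: "(nat \<Rightarrow> real) \<Rightarrow> nat \<Rightarrow> nat \<Rightarrow> real" where
  "top_sum \<theta> n K = sum_list (take K (rev (sort (map \<theta> [0..<n]))))"

definition regret :: "(nat \<Rightarrow> real) \<Rightarrow> nat \<Rightarrow> nat \<Rightarrow> nat set \<Rightarrow> real" where
  "regret \<theta> n K T = (top_sum \<theta> n K - sum \<theta> T) / real K"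

definition eps_top_K :: "(nat \<Rightarrow> real) \<Rightarrow> nat \<Rightarrow> nat \<Rightarrow> real \<Rightarrow> nat set \<Rightarrow> bool" where
  "eps_top_K \<theta> n K \<epsilon> T \<longleftrightarrow> T \<subseteq> {..<n} \<and> card T = K \<and> regret \<theta> n K T \<le> \<epsilon>"

text \<open>stop_prob theta A G t h: probability that, starting from history h, the algorithm
  stops within its next t decisions (i.e. after at most t-1 further pulls) with an
  output satisfying G.\<close>
fun stop_prob :: "(nat \<Rightarrow> real) \<Rightarrow> algorithm \<Rightarrow> (nat set \<Rightarrow> bool) \<Rightarrow> nat
                   \<Rightarrow> (nat \<times> bool) list \<Rightarrow> real" where
  "stop_prob \<theta> A G 0 h = 0"
| "stop_prob \<theta> A G (Suc t) h =
     measure_pmf.expectation (A h)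
       (\<lambda>a. case a of
              Stop S \<Rightarrow> (if G S then 1 else 0)
            | Pull i \<Rightarrow> measure_pmf.expectation (bernoulli_pmf (\<theta> i))
                          (\<lambda>r. stop_prob \<theta> A G t (h @ [(i, r)])))"

definition success_prob :: "(nat \<Rightarrow> real) \<Rightarrow> algorithm \<Rightarrow> (nat set \<Rightarrow> bool) \<Rightarrow> ennreal" where
  "success_prob \<theta> A G = (SUP t. ennreal (stop_prob \<theta> A G t []))"

text \<open>Expected number of pulls N (N = infinity if the algorithm never stops):
  E[N] = sum over t of P(N > t), and P(N \<le> t) = stop_prob with t+1 decisions.\<close>
definition expected_pulls :: "(nat \<Rightarrow> real) \<Rightarrow> algorithm \<Rightarrow> ennreal" where
  "expected_pulls \<theta> A = (\<Sum>t. ennreal (1 - stop_prob \<theta> A (\<lambda>_. True) (Suc t) []))"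

definition eta :: real where "eta = 10 powr (-4)"

text \<open>The family F: n Bernoulli arms with means in {1/2 - eta, 1/2 + eta};
  indices \<ge> n are not arms (their value is normalised to 0).\<close>
definition family :: "nat \<Rightarrow> (nat \<Rightarrow> real) set" where
  "family n = {\<theta>. (\<forall>i<n. \<theta> i \<in> {1/2 - eta, 1/2 + eta}) \<and> (\<forall>i\<ge>n. \<theta> i = 0)}"

end

theory Submission
  imports Defs
begin

text \<open>Take the prior under which each arm is independently good (mean \<open>1/2 + \<eta>\<close>) with
  probability \<open>1/4\<close> and bad (mean \<open>1/2 - \<eta>\<close>) otherwise. Then a budget of \<open>K\<close> good arms is
  exceeded only with exponentially small probability, and an output \<open>S\<close> of size \<open>K\<close> is
  \<open>\<epsilon>\<close>-top-\<open>K\<close> only if it misses at most \<open>K\<epsilon>/(2\<eta>)\<close> good arms. After fewer than about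
  \<open>K log(1/\<epsilon>)\<close> pulls, at least \<open>K/2\<close> arms outside \<open>S\<close> have been pulled at most
  \<open>L \<approx> 500 log(1/\<epsilon>)\<close> times, and each of them is still good with posterior probability
  \<open>\<gtrsim> \<epsilon>\<^sup>1\<^sup>/\<^sup>2\<close>. A Chernoff bound over these independent posteriors shows that every output
  is correct with posterior probability at most \<open>1/2\<close>; by an optional stopping argument the
  same holds for the algorithm's success probability averaged over the prior, contradicting
  the success guarantee \<open>0.9\<close> unless the expected number of pulls is \<open>\<Omega>(K log(1/\<epsilon>))\<close>.\<close>

definition stop_step :: "(nat \<Rightarrow> real) \<Rightarrow> algorithm \<Rightarrow> (nat set \<Rightarrow> bool) \<Rightarrow> nat
    \<Rightarrow> (nat \<times> bool) list \<Rightarrow> action \<Rightarrow> real" where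
  "stop_step \<theta> A G t h a = (case a of
       Stop S \<Rightarrow> (if G S then 1 else 0)
     | Pull i \<Rightarrow> measure_pmf.expectation (bernoulli_pmf (\<theta> i))
                   (\<lambda>r. stop_prob \<theta> A G t (h @ [(i, r)])))"

lemma stop_prob_Suc_step:
  "stop_prob \<theta> A G (Suc t) h = measure_pmf.expectation (A h) (stop_step \<theta> A G t h)"
  by (simp add: stop_step_def[abs_def])

declare stop_prob.simps(2)[simp del]

lemma stop_step_Pull:
  assumes "0 \<le> \<theta> i" "\<theta> i \<le> 1"
  shows "stop_step \<theta> A G t h (Pull i) =
    stop_prob \<theta> A G t (h @ [(i, True)]) * \<theta> i + stop_prob \<theta> A G t (h @ [(i, False)]) * (1 - \<theta> i)"
  using assms by (simp add: stop_step_def)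

lemma stop_step_Stop: "stop_step \<theta> A G t h (Stop S) = (if G S then 1 else 0)"
  by (simp add: stop_step_def)

lemma convex_comb_le_one:
  fixes p x y :: real
  assumes "0 \<le> p" "p \<le> 1" "x \<le> 1" "y \<le> 1"
  shows "x * p + y * (1 - p) \<le> 1"
proof -
  have "x * p + y * (1 - p) \<le> 1 * p + 1 * (1 - p)"
    using assms by (intro add_mono mult_right_mono) auto
  then show ?thesis by simp
qed

context
  fixes \<theta> :: "nat \<Rightarrow> real"
  assumes unit: "\<And>i. 0 \<le> \<theta> i \<and> \<theta> i \<le> 1"
begin

lemma stop_prob_bounds: "0 \<le> stop_prob \<theta> A G t h \<and> stop_prob \<theta> A G t h \<le> 1"
proof (induction t arbitrary: h)
  case 0
  then show ?case by simp
next
  case (Suc t)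
  have step: "0 \<le> stop_step \<theta> A G t h a \<and> stop_step \<theta> A G t h a \<le> 1" for a
  proof (cases a)
    case (Pull i)
    then show ?thesis
      using unit[of i] Suc.IH by (simp add: stop_step_Pull convex_comb_le_one)
  qed (simp add: stop_step_Stop)
  have "measure_pmf.expectation (A h) (stop_step \<theta> A G t h) \<le> measure_pmf.expectation (A h) (\<lambda>_. 1)"
    using step by (intro integral_mono measure_pmf.integrable_const_bound[where B = 1]) auto
  moreover have "0 \<le> measure_pmf.expectation (A h) (stop_step \<theta> A G t h)"
    using step by (intro integral_nonneg_AE) auto
  ultimately show ?case by (simp add: stop_prob_Suc_step)
qed

lemma integrable_stop_step: "integrable (measure_pmf M) (stop_step \<theta> A G t h)"
proof (rule measure_pmf.integrable_const_bound[where B = 1])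
  show "AE a in M. norm (stop_step \<theta> A G t h a) \<le> 1"
  proof (intro AE_I2)
    fix a
    show "norm (stop_step \<theta> A G t h a) \<le> 1"
    proof (cases a)
      case (Pull i)
      then show ?thesis
        using unit[of i] stop_prob_bounds by (simp add: stop_step_Pull convex_comb_le_one)
    qed (simp add: stop_step_Stop)
  qed
qed simp

lemma stop_prob_mono_goal:
  assumes "\<And>S. G S \<Longrightarrow> G' S"
  shows "stop_prob \<theta> A G t h \<le> stop_prob \<theta> A G' t h"
proof (induction t arbitrary: h)
  case 0
  then show ?case by simp
next
  case (Suc t)
  have "stop_step \<theta> A G t h a \<le> stop_step \<theta> A G' t h a" for a
  proof (cases a)
    case (Pull i)
    then show ?thesis
      using unit[of i] Suc.IH by (simp add: stop_step_Pull add_mono mult_right_mono)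
  qed (use assms in \<open>simp add: stop_step_Stop\<close>)
  then show ?case
    unfolding stop_prob_Suc_step by (intro integral_mono integrable_stop_step)
qed

lemma stop_prob_mono_time:
  "B \<le> t \<Longrightarrow> stop_prob \<theta> A G B h \<le> stop_prob \<theta> A G t h"
proof (induction B arbitrary: t h)
  case 0
  then show ?case using stop_prob_bounds by simp
next
  case (Suc B)
  then obtain t' where t: "t = Suc t'" "B \<le> t'" by (cases t) auto
  have "stop_step \<theta> A G B h a \<le> stop_step \<theta> A G t' h a" for a
  proof (cases a)
    case (Pull i)
    then show ?thesis
      using unit[of i] Suc.IH t by (simp add: stop_step_Pull add_mono mult_right_mono)
  qed (simp add: stop_step_Stop)
  then show ?case
    unfolding t stop_prob_Suc_step by (intro integral_mono integrable_stop_step)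
qed

lemma stop_prob_increment_mono_goal:
  assumes "\<And>S. G S \<Longrightarrow> G' S"
  shows "B \<le> t \<Longrightarrow>
    stop_prob \<theta> A G t h - stop_prob \<theta> A G B h \<le> stop_prob \<theta> A G' t h - stop_prob \<theta> A G' B h"
proof (induction B arbitrary: t h)
  case 0
  then show ?case using stop_prob_mono_goal[OF assms] by simp
next
  case (Suc B)
  then obtain t' where t: "t = Suc t'" "B \<le> t'" by (cases t) auto
  have "stop_step \<theta> A G t' h a - stop_step \<theta> A G B h a
      \<le> stop_step \<theta> A G' t' h a - stop_step \<theta> A G' B h a" for a
  proof (cases a)
    case (Pull i)
    let ?d = "\<lambda>G r. stop_prob \<theta> A G t' (h @ [(i, r)]) - stop_prob \<theta> A G B (h @ [(i, r)])"
    have "?d G True * \<theta> i + ?d G False * (1 - \<theta> i) \<le> ?d G' True * \<theta> i + ?d G' False * (1 - \<theta> i)"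
      using Suc.IH t unit[of i] by (intro add_mono mult_right_mono) auto
    then show ?thesis
      using Pull unit[of i] by (simp add: stop_step_Pull algebra_simps)
  qed (use assms in \<open>simp add: stop_step_Stop\<close>)
  then have "measure_pmf.expectation (A h) (\<lambda>a. stop_step \<theta> A G t' h a - stop_step \<theta> A G B h a)
      \<le> measure_pmf.expectation (A h) (\<lambda>a. stop_step \<theta> A G' t' h a - stop_step \<theta> A G' B h a)"
    by (intro integral_mono Bochner_Integration.integrable_diff integrable_stop_step)
  then show ?case
    unfolding t stop_prob_Suc_step by (simp add: Bochner_Integration.integral_diff integrable_stop_step)
qed

text \<open>Stopping with a goal output after decision \<open>B\<close> requires not having stopped by then.\<close>

lemma success_prob_le_truncated:
  "success_prob \<theta> A G \<le> ennreal (stop_prob \<theta> A G B [] + (1 - stop_prob \<theta> A (\<lambda>_. True) B []))"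
proof -
  have "stop_prob \<theta> A G t [] \<le> stop_prob \<theta> A G B [] + (1 - stop_prob \<theta> A (\<lambda>_. True) B [])" for t
  proof (cases "t \<le> B")
    case True
    then show ?thesis
      using stop_prob_mono_time[of t B A G "[]"] stop_prob_bounds[of A "\<lambda>_. True" B "[]"] by linarith
  next
    case False
    then show ?thesis
      using stop_prob_increment_mono_goal[of G "\<lambda>_. True" B t A "[]"]
        stop_prob_bounds[of A "\<lambda>_. True" t "[]"] by simp
  qed
  then show ?thesis
    unfolding success_prob_def by (intro SUP_least ennreal_leI)
qed

lemma expected_pulls_ge_truncated:
  "ennreal (real B * (1 - stop_prob \<theta> A (\<lambda>_. True) B [])) \<le> expected_pulls \<theta> A"
proof -
  let ?c = "1 - stop_prob \<theta> A (\<lambda>_. True) B []"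
  have "ennreal (real B * ?c) = (\<Sum>t<B. ennreal ?c)"
    using stop_prob_bounds[of A "\<lambda>_. True" B "[]"]
    by (simp add: ennreal_mult' ennreal_of_nat_eq_real_of_nat)
  also have "\<dots> \<le> (\<Sum>t<B. ennreal (1 - stop_prob \<theta> A (\<lambda>_. True) (Suc t) []))"
    using stop_prob_mono_time[of _ B A "\<lambda>_. True" "[]"] by (intro sum_mono ennreal_leI) auto
  also have "\<dots> \<le> expected_pulls \<theta> A"
    unfolding expected_pulls_def by (intro sum_le_suminf) auto
  finally show ?thesis .
qed

lemma success_le_stop_prob_add:
  assumes "ennreal p \<le> success_prob \<theta> A G" and "expected_pulls \<theta> A < ennreal X" and "0 < B"
  shows "p \<le> stop_prob \<theta> A G B [] + X / real B"
proof -
  have ge0: "0 \<le> stop_prob \<theta> A G B [] + (1 - stop_prob \<theta> A (\<lambda>_. True) B [])"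
    using stop_prob_bounds[of A G B "[]"] stop_prob_bounds[of A "\<lambda>_. True" B "[]"] by linarith
  have "p \<le> stop_prob \<theta> A G B [] + (1 - stop_prob \<theta> A (\<lambda>_. True) B [])"
    using order_trans[OF assms(1) success_prob_le_truncated[of A G B]] ennreal_le_iff[OF ge0] by simp
  moreover have "real B * (1 - stop_prob \<theta> A (\<lambda>_. True) B []) < X"
    using le_less_trans[OF expected_pulls_ge_truncated[of B A] assms(2)] stop_prob_bounds[of A "\<lambda>_. True" B "[]"]
    by (simp add: ennreal_less_iff)
  then have "1 - stop_prob \<theta> A (\<lambda>_. True) B [] \<le> X / real B"
    using assms(3) by (simp add: le_divide_eq mult.commute)
  ultimately show ?thesis by linarith
qed

end

definition likelihood :: "(nat \<Rightarrow> real) \<Rightarrow> (nat \<times> bool) list \<Rightarrow> real" where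
  "likelihood \<theta> h = prod_list (map (\<lambda>(i, r). if r then \<theta> i else 1 - \<theta> i) h)"

lemma likelihood_snoc:
  "likelihood \<theta> (h @ [(i, r)]) = likelihood \<theta> h * (if r then \<theta> i else 1 - \<theta> i)"
  by (simp add: likelihood_def)

lemma likelihood_nonneg: "(\<And>i. 0 \<le> \<theta> i \<and> \<theta> i \<le> 1) \<Longrightarrow> 0 \<le> likelihood \<theta> h"
  unfolding likelihood_def by (induction h) (auto intro!: mult_nonneg_nonneg)

text \<open>The weighted sums are unnormalised posterior masses, so this is optional stopping: a
  posterior goal mass fraction of at most \<open>\<beta>\<close> at every short history bounds the
  prior-averaged probability of stopping with a goal output.\<close>

lemma mixture_stop_prob_le:
  fixes \<theta> :: "'j \<Rightarrow> nat \<Rightarrow> real"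
  assumes "finite J"
    and unit: "\<And>j i. 0 \<le> \<theta> j i \<and> \<theta> j i \<le> 1"
    and w: "\<And>j. 0 \<le> w j" and "0 \<le> \<beta>"
    and goal: "\<And>h S. length h \<le> N \<Longrightarrow>
       (\<Sum>j\<in>J. w j * likelihood (\<theta> j) h * (if G j S then 1 else 0))
         \<le> \<beta> * (\<Sum>j\<in>J. w j * likelihood (\<theta> j) h)"
  shows "length h + t \<le> Suc N \<Longrightarrow>
    (\<Sum>j\<in>J. w j * likelihood (\<theta> j) h * stop_prob (\<theta> j) A (G j) t h)
      \<le> \<beta> * (\<Sum>j\<in>J. w j * likelihood (\<theta> j) h)"
proof (induction t arbitrary: h)
  case 0
  then show ?case using \<open>0 \<le> \<beta>\<close> w likelihood_nonneg[OF unit] by (simp add: sum_nonneg)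
next
  case (Suc t)
  let ?mass = "\<lambda>h. \<Sum>j\<in>J. w j * likelihood (\<theta> j) h"
  have step: "(\<Sum>j\<in>J. w j * likelihood (\<theta> j) h * stop_step (\<theta> j) A (G j) t h a) \<le> \<beta> * ?mass h" for a
  proof (cases a)
    case (Stop S)
    then show ?thesis using goal[of h S] Suc.prems by (simp add: stop_step_Stop)
  next
    case (Pull i)
    let ?part = "\<lambda>r. \<Sum>j\<in>J. w j * likelihood (\<theta> j) (h @ [(i, r)]) * stop_prob (\<theta> j) A (G j) t (h @ [(i, r)])"
    have "(\<Sum>j\<in>J. w j * likelihood (\<theta> j) h * stop_step (\<theta> j) A (G j) t h a) = ?part True + ?part False"
      unfolding Pull sum.distrib[symmetric] likelihood_snoc
      by (rule sum.cong) (simp_all add: stop_step_Pull unit algebra_simps)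
    also have "\<dots> \<le> \<beta> * ?mass (h @ [(i, True)]) + \<beta> * ?mass (h @ [(i, False)])"
      using Suc.IH Suc.prems by (intro add_mono) simp_all
    also have "\<dots> = \<beta> * ?mass h"
      unfolding distrib_left[symmetric] sum.distrib[symmetric] likelihood_snoc
      by (simp add: algebra_simps)
    finally show ?thesis .
  qed
  have int: "integrable (measure_pmf (A h)) (\<lambda>a. w j * likelihood (\<theta> j) h * stop_step (\<theta> j) A (G j) t h a)" for j
    by (intro Bochner_Integration.integrable_mult_right integrable_stop_step unit)
  have "(\<Sum>j\<in>J. w j * likelihood (\<theta> j) h * stop_prob (\<theta> j) A (G j) (Suc t) h)
      = measure_pmf.expectation (A h) (\<lambda>a. \<Sum>j\<in>J. w j * likelihood (\<theta> j) h * stop_step (\<theta> j) A (G j) t h a)"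
    unfolding stop_prob_Suc_step by (subst Bochner_Integration.integral_sum[OF int]) simp
  also have "\<dots> \<le> measure_pmf.expectation (A h) (\<lambda>a. \<beta> * ?mass h)"
    using step by (intro integral_mono Bochner_Integration.integrable_sum int) auto
  finally show ?case by simp
qed

definition offrange_factor :: "nat \<Rightarrow> (nat \<times> bool) list \<Rightarrow> real" where
  "offrange_factor n h = prod_list (map (\<lambda>(i, r). if i < n \<or> \<not> r then 1 else 0) h)"

lemma offrange_factor_nonneg: "0 \<le> offrange_factor n h"
  unfolding offrange_factor_def by (induction h) auto

lemma likelihood_factorization:
  assumes "\<And>i. n \<le> i \<Longrightarrow> \<theta> i = 0"
  shows "likelihood \<theta> h = offrange_factor n h *
    (\<Prod>i<n. \<theta> i ^ count_list h (i, True) * (1 - \<theta> i) ^ count_list h (i, False))"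
proof (induction h)
  case Nil
  then show ?case by (simp add: likelihood_def offrange_factor_def)
next
  case (Cons x h)
  obtain j r where x: "x = (j, r)" by (cases x)
  let ?c = "if r then \<theta> j else 1 - \<theta> j"
  have lik: "likelihood \<theta> (x # h) = ?c * likelihood \<theta> h" by (simp add: likelihood_def x)
  show ?case
  proof (cases "j < n")
    case True
    have "\<theta> i ^ count_list (x # h) (i, True) * (1 - \<theta> i) ^ count_list (x # h) (i, False)
        = (\<theta> i ^ count_list h (i, True) * (1 - \<theta> i) ^ count_list h (i, False)) * (if i = j then ?c else 1)"
      for i by (cases r) (auto simp: x)
    then have "(\<Prod>i<n. \<theta> i ^ count_list (x # h) (i, True) * (1 - \<theta> i) ^ count_list (x # h) (i, False))
        = (\<Prod>i<n. \<theta> i ^ count_list h (i, True) * (1 - \<theta> i) ^ count_list h (i, False)) * ?c"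
      using True by (simp add: prod.distrib prod.delta')
    moreover have "offrange_factor n (x # h) = offrange_factor n h"
      using True by (simp add: offrange_factor_def x)
    ultimately show ?thesis using lik Cons.IH by simp
  next
    case False
    have "offrange_factor n (x # h) = ?c * offrange_factor n h"
      using False assms[of j] by (simp add: offrange_factor_def x)
    moreover have "count_list (x # h) (i, s) = count_list h (i, s)" if "i < n" for i s
      using that False by (auto simp: x)
    ultimately show ?thesis using lik Cons.IH by simp
  qed
qed

definition good_mean :: real where "good_mean = 1/2 + eta"

definition bad_mean :: real where "bad_mean = 1/2 - eta"

lemma good_bad_mean_values: "good_mean = 5001/10000" "bad_mean = 4999/10000"
  by (simp_all add: good_mean_def bad_mean_def eta_def powr_minus powr_realpow)

definition planted :: "nat \<Rightarrow> nat set \<Rightarrow> nat \<Rightarrow> real" where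
  "planted n H i = (if i < n then if i \<in> H then good_mean else bad_mean else 0)"

lemma planted_unit: "0 \<le> planted n H i \<and> planted n H i \<le> 1"
  by (simp add: planted_def good_bad_mean_values)

lemma planted_in_family: "planted n H \<in> family n"
  by (auto simp: family_def planted_def good_mean_def bad_mean_def)

definition prior :: "nat \<Rightarrow> nat set \<Rightarrow> real" where
  "prior n H = (1/4) ^ card H * (3/4) ^ (n - card H)"

lemma prior_nonneg: "0 \<le> prior n H"
  by (simp add: prior_def)

definition good_weight :: "(nat \<times> bool) list \<Rightarrow> nat \<Rightarrow> real" where
  "good_weight h i = 1/4 * good_mean ^ count_list h (i, True) * bad_mean ^ count_list h (i, False)"

definition bad_weight :: "(nat \<times> bool) list \<Rightarrow> nat \<Rightarrow> real" where
  "bad_weight h i = 3/4 * bad_mean ^ count_list h (i, True) * good_mean ^ count_list h (i, False)"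

lemma good_bad_weight_nonneg: "0 \<le> good_weight h i" "0 \<le> bad_weight h i"
  by (simp_all add: good_weight_def bad_weight_def good_bad_mean_values)

lemma prior_likelihood_factorization:
  assumes "H \<subseteq> {..<n}"
  shows "prior n H * likelihood (planted n H) h
    = offrange_factor n h * (\<Prod>i\<in>H. good_weight h i) * (\<Prod>i\<in>{..<n} - H. bad_weight h i)"
proof -
  have "finite H" using assms finite_subset by blast
  let ?F = "\<lambda>i. planted n H i ^ count_list h (i, True) * (1 - planted n H i) ^ count_list h (i, False)"
  have "(\<Prod>i<n. ?F i) = (\<Prod>i\<in>{..<n} - H. ?F i) * (\<Prod>i\<in>H. ?F i)"
    using assms by (intro prod.subset_diff) auto
  also have "(\<Prod>i\<in>H. ?F i) = (\<Prod>i\<in>H. good_mean ^ count_list h (i, True) * bad_mean ^ count_list h (i, False))"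
    using assms by (intro prod.cong) (auto simp: planted_def good_bad_mean_values)
  also have "(\<Prod>i\<in>{..<n} - H. ?F i)
      = (\<Prod>i\<in>{..<n} - H. bad_mean ^ count_list h (i, True) * good_mean ^ count_list h (i, False))"
    by (intro prod.cong) (auto simp: planted_def good_bad_mean_values)
  finally have lik: "likelihood (planted n H) h = offrange_factor n h *
      ((\<Prod>i\<in>{..<n} - H. bad_mean ^ count_list h (i, True) * good_mean ^ count_list h (i, False)) *
       (\<Prod>i\<in>H. good_mean ^ count_list h (i, True) * bad_mean ^ count_list h (i, False)))"
    using likelihood_factorization[of n "planted n H" h] by (simp add: planted_def[of n H i for i])
  have "card ({..<n} - H) = n - card H"
    using assms \<open>finite H\<close> by (simp add: card_Diff_subset)
  then have "prior n H = (\<Prod>i\<in>H. 1/4) * (\<Prod>i\<in>{..<n} - H. 3/4)"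
    by (simp add: prior_def)
  moreover have "(\<Prod>i\<in>H. good_weight h i)
      = (\<Prod>i\<in>H. 1/4) * (\<Prod>i\<in>H. good_mean ^ count_list h (i, True) * bad_mean ^ count_list h (i, False))"
    unfolding good_weight_def prod.distrib[symmetric] by (simp add: mult.assoc)
  moreover have "(\<Prod>i\<in>{..<n} - H. bad_weight h i) = (\<Prod>i\<in>{..<n} - H. 3/4) *
      (\<Prod>i\<in>{..<n} - H. bad_mean ^ count_list h (i, True) * good_mean ^ count_list h (i, False))"
    unfolding bad_weight_def prod.distrib[symmetric] by (simp add: mult.assoc)
  ultimately show ?thesis
    unfolding lik by (simp add: ac_simps)
qed

text \<open>Under the prior the arms stay independent a posteriori.\<close>

lemma prior_likelihood_sum_prod:
  "(\<Sum>H\<in>Pow {..<n}. prior n H * likelihood (planted n H) h * (\<Prod>i\<in>H. c i))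
    = offrange_factor n h * (\<Prod>i<n. good_weight h i * c i + bad_weight h i)"
proof -
  have "(\<Sum>H\<in>Pow {..<n}. prior n H * likelihood (planted n H) h * (\<Prod>i\<in>H. c i))
      = (\<Sum>H\<in>Pow {..<n}. offrange_factor n h *
          ((\<Prod>i\<in>H. good_weight h i * c i) * (\<Prod>i\<in>{..<n} - H. bad_weight h i)))"
    by (intro sum.cong refl) (simp add: prior_likelihood_factorization prod.distrib ac_simps)
  then show ?thesis
    by (simp add: prod_add sum_distrib_left)
qed

lemma prior_likelihood_sum:
  "(\<Sum>H\<in>Pow {..<n}. prior n H * likelihood (planted n H) h)
    = offrange_factor n h * (\<Prod>i<n. good_weight h i + bad_weight h i)"
  using prior_likelihood_sum_prod[of n h "\<lambda>_. 1"] by simp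

lemma prior_sum_eq_one: "(\<Sum>H\<in>Pow {..<n}. prior n H) = 1"
  using prior_likelihood_sum[of n "[]"]
  by (simp add: likelihood_def offrange_factor_def good_weight_def bad_weight_def)

lemma prior_card_gt_le: "(\<Sum>H\<in>Pow {..<n}. prior n H * (if K < card H then 1 else 0)) \<le> (5/4) ^ n / 2 ^ K"
proof -
  have "(if K < card H then 1 else 0) \<le> (\<Prod>i\<in>H. 2 :: real) / 2 ^ K" for H
    using power_increasing[of K "card H" "2::real"] by auto
  then have "(\<Sum>H\<in>Pow {..<n}. prior n H * (if K < card H then 1 else 0))
      \<le> (\<Sum>H\<in>Pow {..<n}. prior n H * ((\<Prod>i\<in>H. 2) / 2 ^ K))"
    by (intro sum_mono mult_left_mono prior_nonneg)
  also have "\<dots> = (\<Sum>H\<in>Pow {..<n}. prior n H * likelihood (planted n H) [] * (\<Prod>i\<in>H. 2)) / 2 ^ K"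
    by (simp add: sum_divide_distrib likelihood_def)
  also have "\<dots> = (5/4) ^ n / 2 ^ K"
    unfolding prior_likelihood_sum_prod
    by (simp add: offrange_factor_def good_weight_def bad_weight_def)
  finally show ?thesis .
qed

lemma sum_mset_le_sum_take:
  fixes zs :: "real list"
  shows "sorted_wrt (\<ge>) zs \<Longrightarrow> Y \<subseteq># mset zs \<Longrightarrow> size Y = K \<Longrightarrow> sum_mset Y \<le> sum_list (take K zs)"
proof (induction zs arbitrary: Y K)
  case Nil
  then show ?case by simp
next
  case (Cons z zs)
  show ?case
  proof (cases K)
    case 0
    then show ?thesis using Cons by simp
  next
    case (Suc k)
    show ?thesis
    proof (cases "z \<in># Y")
      case True
      then obtain Y' where Y: "Y = add_mset z Y'" by (metis insert_DiffM)
      have "sum_mset Y' \<le> sum_list (take k zs)"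
        using Cons.prems Suc Cons.IH unfolding Y by (simp add: mset_subset_eq_add_mset_cancel)
      then show ?thesis using Y Suc by simp
    next
      case False
      have "count Y a \<le> count (mset zs) a" for a
        using Cons.prems(2)[unfolded subseteq_mset_def, rule_format, of a] False
        by (cases "a = z") (auto simp: not_in_iff)
      then have sub: "Y \<subseteq># mset zs" by (simp add: subseteq_mset_def)
      then have "sum_mset Y \<le> sum_list (take K zs)" using Cons.IH Cons.prems by simp
      moreover have "k < length zs"
        using size_mset_mono[OF sub] Cons.prems(3) Suc by simp
      then have "take K zs = take k zs @ [zs ! k]" and "zs ! k \<le> z"
        using Suc Cons.prems(1) by (simp_all add: take_Suc_conv_app_nth)
      ultimately show ?thesis using Suc by simp
    qed
  qed
qed

lemma sum_le_top_sum:
  assumes "T \<subseteq> {..<n}" "card T = K"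
  shows "sum \<theta> T \<le> top_sum \<theta> n K"
proof -
  let ?zs = "rev (sort (map \<theta> [0..<n]))"
  have "finite T" using assms(1) finite_subset by blast
  then have "image_mset \<theta> (mset_set T) \<subseteq># image_mset \<theta> (mset_set {..<n})"
    using assms(1) by (intro image_mset_subseteq_mono) simp
  moreover have "mset ?zs = image_mset \<theta> (mset_set {..<n})"
    by (simp add: atLeast0LessThan)
  ultimately show ?thesis
    unfolding top_sum_def sum_unfold_sum_mset[of \<theta> T]
    using sum_mset_le_sum_take[of ?zs] assms by (simp add: sorted_wrt_rev)
qed

lemma sum_planted:
  assumes "X \<subseteq> {..<n}"
  shows "sum (planted n H) X = real (card (X \<inter> H)) * good_mean + real (card (X - H)) * bad_mean"
proof -
  have "finite X" using assms finite_subset by blast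
  then have "sum (planted n H) X = sum (planted n H) (X \<inter> H) + sum (planted n H) (X - H)"
    by (rule sum.Int_Diff)
  also have "\<dots> = sum (\<lambda>_. good_mean) (X \<inter> H) + sum (\<lambda>_. bad_mean) (X - H)"
    using assms by (intro arg_cong2[where f = "(+)"] sum.cong) (auto simp: planted_def)
  finally show ?thesis by simp
qed

text \<open>Comparing \<open>S\<close> with a top-\<open>K\<close> set containing all of \<open>H\<close>: each good arm missed by \<open>S\<close>
  costs \<open>good_mean - bad_mean\<close> in aggregate regret.\<close>

lemma eps_top_K_planted_missed:
  assumes H: "H \<subseteq> {..<n}" "card H \<le> K" and "K \<le> n" "1 \<le> K"
    and "eps_top_K (planted n H) n K \<epsilon> S"
  shows "real (card (H - S)) * (good_mean - bad_mean) \<le> real K * \<epsilon>"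
proof -
  have S: "S \<subseteq> {..<n}" "card S = K"
    and regret: "top_sum (planted n H) n K - sum (planted n H) S \<le> real K * \<epsilon>"
    using assms by (auto simp: eps_top_K_def regret_def divide_le_eq mult.commute)
  have fin: "finite H" "finite S" using H(1) S(1) finite_subset by blast+
  have "K - card H \<le> card ({..<n} - H)" using H fin \<open>K \<le> n\<close> by (simp add: card_Diff_subset)
  then obtain B where B: "B \<subseteq> {..<n} - H" "card B = K - card H" "finite B"
    by (rule obtain_subset_with_card_n)
  have "H \<inter> B = {}" using B by blast
  then have T: "H \<union> B \<subseteq> {..<n}" "card (H \<union> B) = K"
    using B H fin by (auto simp: card_Un_disjoint)
  have "(H \<union> B) \<inter> H = H" "(H \<union> B) - H = B" using B by auto
  then have sT: "sum (planted n H) (H \<union> B) = real (card H) * good_mean + real (K - card H) * bad_mean"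
    using sum_planted[OF T(1)] B by simp
  have "card (S - H) = K - card (S \<inter> H)"
    using S fin by (metis card_Diff_subset_Int finite_Int)
  then have sS: "sum (planted n H) S = real (card (S \<inter> H)) * good_mean + real (K - card (S \<inter> H)) * bad_mean"
    using sum_planted[OF S(1)] by simp
  have "card (S \<inter> H) \<le> card H" "card (H - S) = card H - card (S \<inter> H)"
    using fin by (auto simp: card_mono card_Diff_subset_Int Int_commute)
  then have "real (card (H - S)) * (good_mean - bad_mean) = sum (planted n H) (H \<union> B) - sum (planted n H) S"
    unfolding sT sS using H(2) by (simp add: of_nat_diff algebra_simps)
  then show ?thesis
    using sum_le_top_sum[OF T, of "planted n H"] regret by linarith
qed

lemma sum_count_list_le_length:
  "finite I \<Longrightarrow> (\<Sum>i\<in>I. count_list h (i, True) + count_list h (i, False)) \<le> length h"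
proof (induction h)
  case Nil
  then show ?case by simp
next
  case (Cons x h)
  obtain j r where x: "x = (j, r)" by (cases x)
  have "count_list (x # h) (i, True) + count_list (x # h) (i, False)
      = (count_list h (i, True) + count_list h (i, False)) + (if i = j then 1 else 0)" for i
    by (cases r) (auto simp: x)
  then have "(\<Sum>i\<in>I. count_list (x # h) (i, True) + count_list (x # h) (i, False))
      = (\<Sum>i\<in>I. count_list h (i, True) + count_list h (i, False)) + (\<Sum>i\<in>I. if i = j then 1 else 0)"
    by (simp add: sum.distrib)
  moreover have "(\<Sum>i\<in>I. if i = j then 1 else 0) \<le> (1::nat)"
    using Cons.prems by (simp add: sum.delta')
  ultimately show ?case using Cons by simp
qed

lemma card_rarely_pulled_ge:
  assumes S: "S \<subseteq> {..<2 * K}" "card S = K"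
    and "length h \<le> N" and "2 * N \<le> K * (L + 1)"
  shows "K \<le> 2 * card {i \<in> {..<2 * K} - S. count_list h (i, True) + count_list h (i, False) \<le> L}"
proof -
  let ?pulls = "\<lambda>i. count_list h (i, True) + count_list h (i, False)"
  let ?Q = "{i \<in> {..<2 * K} - S. ?pulls i \<le> L}"
  let ?R = "{i \<in> {..<2 * K} - S. L < ?pulls i}"
  have "card ({..<2 * K} - S) = K"
    using S finite_subset[OF S(1)] by (simp add: card_Diff_subset)
  moreover have "?Q \<union> ?R = {..<2 * K} - S" "?Q \<inter> ?R = {}" by auto
  ultimately have QR: "card ?Q + card ?R = K" using card_Un_disjoint[of ?Q ?R] by simp
  have "card ?R * (L + 1) = (\<Sum>i\<in>?R. L + 1)" by simp
  also have "\<dots> \<le> (\<Sum>i\<in>?R. ?pulls i)" by (intro sum_mono) auto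
  also have "\<dots> \<le> (\<Sum>i\<in>{..<2 * K}. ?pulls i)" by (intro sum_mono2) auto
  also have "\<dots> \<le> length h" by (rule sum_count_list_le_length) simp
  finally have "2 * card ?R * (L + 1) \<le> K * (L + 1)" using assms by linarith
  then show ?thesis using QR mult_le_cancel2[of "2 * card ?R" "L + 1" K] by simp
qed

definition capped_goal :: "nat \<Rightarrow> nat \<Rightarrow> real \<Rightarrow> nat set \<Rightarrow> nat set \<Rightarrow> bool" where
  "capped_goal n K \<epsilon> H S \<longleftrightarrow> eps_top_K (planted n H) n K \<epsilon> S \<and> card H \<le> K"

lemma capped_goal_le_exponential:
  assumes "H \<subseteq> {..<n}" "K \<le> n" "1 \<le> K"
  shows "(if capped_goal n K \<epsilon> H S then 1 else 0)
    \<le> 2 powr (real K * \<epsilon> / (good_mean - bad_mean)) * (\<Prod>i\<in>H. if i \<in> S then 1 else 1/2 :: real)"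
proof (cases "capped_goal n K \<epsilon> H S")
  case True
  have "finite H" using assms(1) finite_subset by blast
  have "real (card (H - S)) * (good_mean - bad_mean) \<le> real K * \<epsilon>"
    using True assms eps_top_K_planted_missed by (auto simp: capped_goal_def)
  then have missed: "real (card (H - S)) \<le> real K * \<epsilon> / (good_mean - bad_mean)"
    by (simp add: pos_le_divide_eq good_bad_mean_values)
  have "(\<Prod>i\<in>H. if i \<in> S then 1 else 1/2 :: real) = (\<Prod>i\<in>H \<inter> {i. i \<in> S}. 1) * (\<Prod>i\<in>H \<inter> - {i. i \<in> S}. 1/2)"
    using \<open>finite H\<close> by (rule prod.If_cases)
  also have "\<dots> = 2 powr (- real (card (H - S)))"
    by (simp add: Diff_eq powr_minus powr_realpow power_one_over inverse_eq_divide)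
  finally have "2 powr (real K * \<epsilon> / (good_mean - bad_mean)) * (\<Prod>i\<in>H. if i \<in> S then 1 else 1/2 :: real)
      = 2 powr (real K * \<epsilon> / (good_mean - bad_mean) - real (card (H - S)))"
    by (simp add: powr_diff powr_minus divide_inverse)
  moreover have "1 \<le> 2 powr (real K * \<epsilon> / (good_mean - bad_mean) - real (card (H - S)))"
    using missed by (intro ge_one_powr_ge_zero) auto
  ultimately show ?thesis using True by simp
qed (simp add: prod_nonneg)

text \<open>An arm pulled at most \<open>L\<close> times has posterior odds of being good at least
  \<open>(1/3) (v/u)\<^sup>L\<close>, so halving the weight of its good hypothesis removes at least a
  fraction \<open>(v/u)\<^sup>L/16\<close> of its posterior mass.\<close>

lemma halved_good_weight_le:
  fixes u v :: real
  assumes "0 < v" "v \<le> u" "b \<le> L"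
  shows "(1/4 * u ^ a * v ^ b) * (1/2) + 3/4 * v ^ a * u ^ b
    \<le> (1 - (v/u) ^ L / 16) * (1/4 * u ^ a * v ^ b + 3/4 * v ^ a * u ^ b)"
proof -
  have u: "0 < u" using assms by simp
  let ?p = "(v/u) ^ L" and ?X = "u ^ a * v ^ b" and ?Y = "v ^ a * u ^ b"
  have ratio: "0 \<le> v/u" "v/u \<le> 1" using assms u by auto
  have "?p * ?Y \<le> (v/u) ^ b * ?Y"
    using ratio assms by (intro mult_right_mono power_decreasing) auto
  also have "\<dots> = v ^ a * v ^ b" using u by (simp add: power_divide)
  also have "\<dots> \<le> ?X" using assms by (intro mult_right_mono power_mono) auto
  finally have Y: "?p * ?Y \<le> ?X" .
  have X: "?p * ?X \<le> ?X"
    using ratio assms by (intro mult_left_le_one_le) (auto simp: power_le_one)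
  have "(1/4 * u ^ a * v ^ b) * (1/2) + 3/4 * v ^ a * u ^ b = ?X / 8 + 3/4 * ?Y"
    by simp
  moreover have "(1 - ?p / 16) * (1/4 * u ^ a * v ^ b + 3/4 * v ^ a * u ^ b)
      = ?X / 4 + 3/4 * ?Y - (?p * ?X) / 64 - 3 * (?p * ?Y) / 64"
    by (simp add: field_simps)
  moreover have "0 \<le> ?X" using assms u by simp
  ultimately show ?thesis using X Y by linarith
qed

lemma weights_prod_le:
  fixes n L :: nat and S :: "nat set" and h :: "(nat \<times> bool) list"
  defines "Q \<equiv> {i \<in> {..<n} - S. count_list h (i, False) \<le> L}"
  shows "(\<Prod>i<n. good_weight h i * (if i \<in> S then 1 else 1/2) + bad_weight h i)
    \<le> (1 - (bad_mean / good_mean) ^ L / 16) ^ card Q * (\<Prod>i<n. good_weight h i + bad_weight h i)"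
proof -
  let ?\<gamma> = "(bad_mean / good_mean) ^ L / 16"
  have "(\<Prod>i<n. good_weight h i * (if i \<in> S then 1 else 1/2) + bad_weight h i)
      \<le> (\<Prod>i<n. (if i \<in> Q then 1 - ?\<gamma> else 1) * (good_weight h i + bad_weight h i))"
  proof (intro prod_mono conjI)
    fix i
    show "0 \<le> good_weight h i * (if i \<in> S then 1 else 1/2) + bad_weight h i"
      using good_bad_weight_nonneg[of h i] by simp
    show "good_weight h i * (if i \<in> S then 1 else 1/2) + bad_weight h i
        \<le> (if i \<in> Q then 1 - ?\<gamma> else 1) * (good_weight h i + bad_weight h i)"
    proof (cases "i \<in> Q")
      case True
      then show ?thesis
        using halved_good_weight_le[of bad_mean good_mean "count_list h (i, False)" L "count_list h (i, True)"]
        unfolding Q_def good_weight_def bad_weight_def by (simp add: good_bad_mean_values)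
    next
      case False
      then show ?thesis
        using good_bad_weight_nonneg[of h i] by (simp add: mult_left_le)
    qed
  qed
  also have "\<dots> = (\<Prod>i<n. if i \<in> Q then 1 - ?\<gamma> else 1) * (\<Prod>i<n. good_weight h i + bad_weight h i)"
    by (rule prod.distrib)
  also have "(\<Prod>i<n. if i \<in> Q then 1 - ?\<gamma> else 1) = (1 - ?\<gamma>) ^ card Q"
    using prod.If_cases[of "{..<n}" "\<lambda>i. i \<in> Q" "\<lambda>_. 1 - ?\<gamma>" "\<lambda>_. 1"]
    by (simp add: Q_def Int_absorb1 subset_eq)
  finally show ?thesis .
qed

definition posterior_bound :: "nat \<Rightarrow> real \<Rightarrow> nat \<Rightarrow> real" where
  "posterior_bound K \<epsilon> L = 2 powr (real K * \<epsilon> / (good_mean - bad_mean))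
      * exp (- ((bad_mean / good_mean) ^ L / 16) * real K / 2)"

lemma posterior_capped_goal_le:
  assumes "1 \<le> K" "length h \<le> N" "2 * N \<le> K * (L + 1)"
  shows "(\<Sum>H\<in>Pow {..<2 * K}. prior (2 * K) H * likelihood (planted (2 * K) H) h
            * (if capped_goal (2 * K) K \<epsilon> H S then 1 else 0))
    \<le> posterior_bound K \<epsilon> L * (\<Sum>H\<in>Pow {..<2 * K}. prior (2 * K) H * likelihood (planted (2 * K) H) h)"
    (is "?goal \<le> _ * ?mass")
proof (cases "S \<subseteq> {..<2 * K} \<and> card S = K")
  case False
  then have "\<not> capped_goal (2 * K) K \<epsilon> H S" for H
    by (auto simp: capped_goal_def eps_top_K_def)
  moreover have "0 \<le> ?mass"
    using prior_nonneg likelihood_nonneg[OF planted_unit] by (simp add: sum_nonneg)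
  ultimately show ?thesis by (simp add: posterior_bound_def)
next
  case True
  let ?n = "2 * K" and ?\<gamma> = "(bad_mean / good_mean) ^ L / 16"
  let ?Q = "{i \<in> {..<?n} - S. count_list h (i, False) \<le> L}"
  let ?weights = "offrange_factor ?n h * (\<Prod>i<?n. good_weight h i + bad_weight h i)"
  have weights: "0 \<le> ?weights"
    using offrange_factor_nonneg good_bad_weight_nonneg by (simp add: prod_nonneg)
  have \<gamma>: "0 \<le> ?\<gamma>" "?\<gamma> \<le> 1"
    using power_le_one[of "bad_mean / good_mean" L] by (simp_all add: good_bad_mean_values)
  have "K \<le> 2 * card {i \<in> {..<?n} - S. count_list h (i, True) + count_list h (i, False) \<le> L}"
    using True assms card_rarely_pulled_ge by blast
  also have "\<dots> \<le> 2 * card ?Q"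
    by (intro mult_le_mono2 card_mono) auto
  finally have Q: "real K \<le> 2 * real (card ?Q)" by linarith
  have decay: "(1 - ?\<gamma>) ^ card ?Q \<le> exp (- ?\<gamma> * real K / 2)"
  proof -
    have "(1 - ?\<gamma>) ^ card ?Q \<le> exp (- ?\<gamma>) ^ card ?Q"
      using \<gamma> exp_ge_add_one_self[of "- ?\<gamma>"] by (intro power_mono) auto
    also have "\<dots> = exp (- ?\<gamma> * real (card ?Q))"
      by (simp add: exp_of_nat_mult[symmetric] mult.commute)
    also have "\<dots> \<le> exp (- ?\<gamma> * real K / 2)"
      using mult_left_mono[OF Q \<gamma>(1)] by simp
    finally show ?thesis .
  qed
  have "?goal \<le> (\<Sum>H\<in>Pow {..<?n}. prior ?n H * likelihood (planted ?n H) h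
      * (2 powr (real K * \<epsilon> / (good_mean - bad_mean)) * (\<Prod>i\<in>H. if i \<in> S then 1 else 1/2)))"
    using capped_goal_le_exponential assms(1) prior_nonneg likelihood_nonneg[OF planted_unit]
    by (intro sum_mono mult_left_mono) auto
  also have "\<dots> = 2 powr (real K * \<epsilon> / (good_mean - bad_mean)) * (\<Sum>H\<in>Pow {..<?n}.
      prior ?n H * likelihood (planted ?n H) h * (\<Prod>i\<in>H. if i \<in> S then 1 else 1/2))"
    by (simp add: sum_distrib_left ac_simps)
  also have "\<dots> = 2 powr (real K * \<epsilon> / (good_mean - bad_mean)) * offrange_factor ?n h
      * (\<Prod>i<?n. good_weight h i * (if i \<in> S then 1 else 1/2) + bad_weight h i)"
    unfolding prior_likelihood_sum_prod by (simp add: ac_simps)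
  also have "\<dots> \<le> 2 powr (real K * \<epsilon> / (good_mean - bad_mean)) * ((1 - ?\<gamma>) ^ card ?Q * ?weights)"
    using weights_prod_le[where n = ?n and L = L and S = S and h = h] offrange_factor_nonneg
    by (simp add: mult_left_mono ac_simps)
  also have "\<dots> \<le> 2 powr (real K * \<epsilon> / (good_mean - bad_mean)) * (exp (- ?\<gamma> * real K / 2) * ?weights)"
    using decay weights by (intro mult_left_mono mult_right_mono) auto
  also have "\<dots> = posterior_bound K \<epsilon> L * ?mass"
    by (simp add: posterior_bound_def prior_likelihood_sum)
  finally show ?thesis .
qed

lemma exp_neg_half_le_ratio_power:
  assumes "0 \<le> l" "real L \<le> 500 * l"
  shows "exp (- l / 2) \<le> (bad_mean / good_mean) ^ L"
proof -
  have ratio: "good_mean / bad_mean = 5001/4999" by (simp add: good_bad_mean_values)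
  have "ln (good_mean / bad_mean) \<le> good_mean / bad_mean - 1"
    by (rule ln_le_minus_one) (simp add: ratio)
  then have "real L * ln (good_mean / bad_mean) \<le> 500 * l * (1/1000)"
    using assms by (intro mult_mono) (auto simp: ratio)
  moreover have "ln (bad_mean / good_mean) = - ln (good_mean / bad_mean)"
    using ln_inverse[of "good_mean / bad_mean"] by (simp add: good_bad_mean_values)
  ultimately have "- l / 2 \<le> real L * ln (bad_mean / good_mean)" by simp
  then have "exp (- l / 2) \<le> exp (ln (bad_mean / good_mean)) ^ L"
    by (simp add: exp_of_nat_mult[symmetric])
  then show ?thesis by (simp add: good_bad_mean_values)
qed

text \<open>With \<open>s = \<epsilon>\<^sup>1\<^sup>/\<^sup>2 \<le> (v/u)\<^sup>L\<close>, the bound is at most \<open>exp (5000 K \<epsilon> - s K / 32)\<close>, and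
  \<open>\<epsilon> \<le> 10\<^sup>-\<^sup>1\<^sup>2\<close>, \<open>K \<epsilon> \<ge> 10\<^sup>5\<close> make the exponent at most \<open>-1\<close>.\<close>

lemma posterior_bound_le_half:
  assumes "1 \<le> K" "100000 / real K \<le> \<epsilon>" "\<epsilon> \<le> 1/10^12"
    and L: "real L \<le> 500 * ln (1/\<epsilon>)"
  shows "posterior_bound K \<epsilon> L \<le> 1/2"
proof -
  have K: "0 < real K" using assms(1) by simp
  have \<epsilon>: "0 < \<epsilon>" using assms(2) K by (smt (verit) divide_pos_pos)
  have "100000 \<le> \<epsilon> * real K" using assms(2) K by (simp add: divide_le_eq mult.commute)
  define s where "s = exp (- ln (1/\<epsilon>) / 2)"
  have s: "0 < s" unfolding s_def by simp
  have ss: "s * s = \<epsilon>"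
    unfolding s_def using \<epsilon> by (simp add: exp_add[symmetric] ln_div)
  have "s \<le> 1/1000000"
  proof (rule ccontr)
    assume "\<not> s \<le> 1/1000000"
    then have "1/1000000 * (1/1000000) < s * s" by (intro mult_strict_mono) auto
    then show False using ss assms(3) by simp
  qed
  then have "5000 * s * s \<le> 5000 * (1/1000000) * s"
    using s by (intro mult_right_mono) auto
  then have "5000 * \<epsilon> \<le> s / 64" using ss s by simp
  then have small: "5000 * real K * \<epsilon> \<le> s * real K / 64"
    using K by (simp add: mult_right_mono mult.commute mult.left_commute)
  have "300 \<le> s * real K"
  proof (rule ccontr)
    assume "\<not> 300 \<le> s * real K"
    then have "(s * real K) * (s * real K) < 300 * 300"
      using s K by (intro mult_strict_mono) auto
    moreover have "\<epsilon> * real K * 1 \<le> \<epsilon> * real K * real K"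
      using \<epsilon> K assms(1) by (intro mult_left_mono) auto
    moreover have "(s * real K) * (s * real K) = \<epsilon> * real K * real K"
      using ss by (simp add: algebra_simps)
    ultimately show False
      using \<open>100000 \<le> \<epsilon> * real K\<close> by linarith
  qed
  have "2 powr (real K * \<epsilon> / (good_mean - bad_mean)) = exp (ln 2 * (5000 * real K * \<epsilon>))"
    by (simp add: powr_def good_bad_mean_values algebra_simps)
  also have "\<dots> \<le> exp (5000 * real K * \<epsilon>)"
    using ln_2_less_1 \<epsilon> K by (intro exp_mono) (simp add: mult_left_le_one_le)
  finally have A: "2 powr (real K * \<epsilon> / (good_mean - bad_mean)) \<le> exp (5000 * real K * \<epsilon>)" .
  have "s \<le> (bad_mean / good_mean) ^ L"
    unfolding s_def using exp_neg_half_le_ratio_power L \<epsilon> assms(3) by simp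
  then have B: "exp (- ((bad_mean / good_mean) ^ L / 16) * real K / 2) \<le> exp (- (s / 16) * real K / 2)"
    using K by (intro exp_mono) (simp add: divide_right_mono mult_right_mono)
  have "posterior_bound K \<epsilon> L \<le> exp (5000 * real K * \<epsilon>) * exp (- (s / 16) * real K / 2)"
    unfolding posterior_bound_def using A B by (intro mult_mono) auto
  also have "\<dots> \<le> exp (-1)"
    using small \<open>300 \<le> s * real K\<close> by (simp add: exp_add[symmetric])
  also have "\<dots> \<le> 1/2"
    using exp_ge_add_one_self[of 1] by (simp add: exp_minus field_simps)
  finally show ?thesis .
qed

lemma capped_success_ge:
  assumes "H \<subseteq> {..<2 * K}"
    and "0.9 \<le> success_prob (planted (2 * K) H) A (eps_top_K (planted (2 * K) H) (2 * K) K \<epsilon>)"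
    and "expected_pulls (planted (2 * K) H) A < ennreal X" and "0 < B"
  shows "0.9 - X / real B
    \<le> stop_prob (planted (2 * K) H) A (capped_goal (2 * K) K \<epsilon> H) B [] + (if K < card H then 1 else 0)"
proof -
  have "ennreal 0.9 = 0.9"
    by (metis divide_ennreal ennreal_numeral zero_le_numeral zero_less_numeral)
  then have "ennreal 0.9 \<le> success_prob (planted (2 * K) H) A (eps_top_K (planted (2 * K) H) (2 * K) K \<epsilon>)"
    using assms(2) by simp
  then have "0.9 \<le> stop_prob (planted (2 * K) H) A (eps_top_K (planted (2 * K) H) (2 * K) K \<epsilon>) B [] + X / real B"
    using success_le_stop_prob_add[where \<theta> = "planted (2 * K) H", OF planted_unit] assms(3,4) by blast
  moreover have "stop_prob (planted (2 * K) H) A (eps_top_K (planted (2 * K) H) (2 * K) K \<epsilon>) B []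
      \<le> stop_prob (planted (2 * K) H) A (capped_goal (2 * K) K \<epsilon> H) B [] + (if K < card H then 1 else 0)"
  proof (cases "K < card H")
    case True
    then show ?thesis
      using stop_prob_bounds[where \<theta> = "planted (2 * K) H", OF planted_unit] by (smt (verit))
  next
    case False
    then have "capped_goal (2 * K) K \<epsilon> H = eps_top_K (planted (2 * K) H) (2 * K) K \<epsilon>"
      by (auto simp: capped_goal_def fun_eq_iff)
    then show ?thesis by simp
  qed
  ultimately show ?thesis by linarith
qed

lemma prior_average_success_le:
  assumes "1 \<le> K" "2 * N \<le> K * (L + 1)"
    and success: "\<And>H. H \<subseteq> {..<2 * K} \<Longrightarrow>
      p \<le> stop_prob (planted (2 * K) H) A (capped_goal (2 * K) K \<epsilon> H) (Suc N) [] + (if K < card H then 1 else 0)"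
  shows "p \<le> posterior_bound K \<epsilon> L + (25/32) ^ K"
proof -
  let ?stop = "\<lambda>H. stop_prob (planted (2 * K) H) A (capped_goal (2 * K) K \<epsilon> H) (Suc N) []"
  have "(\<Sum>H\<in>Pow {..<2 * K}. prior (2 * K) H * likelihood (planted (2 * K) H) [] * ?stop H)
      \<le> posterior_bound K \<epsilon> L * (\<Sum>H\<in>Pow {..<2 * K}. prior (2 * K) H * likelihood (planted (2 * K) H) [])"
    using assms(1,2) posterior_capped_goal_le
    by (intro mixture_stop_prob_le[where N = N]) (auto simp: planted_unit prior_nonneg posterior_bound_def)
  then have stop: "(\<Sum>H\<in>Pow {..<2 * K}. prior (2 * K) H * ?stop H) \<le> posterior_bound K \<epsilon> L"
    using prior_sum_eq_one by (simp add: likelihood_def)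
  have "(5/4) ^ (2 * K) / 2 ^ K = (25/32 :: real) ^ K"
    by (simp add: power_mult power_divide power_mult_distrib[symmetric])
  then have tail: "(\<Sum>H\<in>Pow {..<2 * K}. prior (2 * K) H * (if K < card H then 1 else 0)) \<le> (25/32) ^ K"
    using prior_card_gt_le by metis
  have "p = (\<Sum>H\<in>Pow {..<2 * K}. prior (2 * K) H * p)"
    using prior_sum_eq_one by (simp add: sum_distrib_right[symmetric])
  also have "\<dots> \<le> (\<Sum>H\<in>Pow {..<2 * K}. prior (2 * K) H * (?stop H + (if K < card H then 1 else 0)))"
    using success prior_nonneg by (intro sum_mono mult_left_mono) auto
  also have "\<dots> \<le> posterior_bound K \<epsilon> L + (25/32) ^ K"
    using stop tail by (simp add: distrib_left sum.distrib)
  finally show ?thesis .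
qed

lemma tail_bound_le_tenth:
  assumes "1 \<le> K" "100000 / real K \<le> \<epsilon>" "\<epsilon> \<le> 1/10^12"
  shows "(25/32 :: real) ^ K \<le> 1/10"
proof -
  have "100000 \<le> \<epsilon> * real K"
    using assms(1,2) by (simp add: divide_le_eq mult.commute)
  moreover have "\<epsilon> * real K \<le> 1/10^12 * real K"
    using assms(3) by (intro mult_right_mono) auto
  ultimately have "real K \<ge> 10" by simp
  then have "(25/32 :: real) ^ K \<le> (25/32) ^ 10"
    by (intro power_decreasing) auto
  also have "\<dots> \<le> 1/10"
    by (simp add: power_divide)
  finally show ?thesis .
qed

lemma expected_pulls_lower_bound:
  assumes "1 \<le> K" "100000 / real K \<le> \<epsilon>" "\<epsilon> \<le> 1/10^12"
    and success: "\<forall>\<theta>\<in>family (2 * K). success_prob \<theta> A (eps_top_K \<theta> (2 * K) K \<epsilon>) \<ge> 0.9"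
  shows "\<exists>H \<subseteq> {..<2 * K}. expected_pulls (planted (2 * K) H) A \<ge> ennreal (2 * real K * ln (1/\<epsilon>))"
proof (rule ccontr)
  assume "\<not> ?thesis"
  then have pulls: "\<And>H. H \<subseteq> {..<2 * K} \<Longrightarrow> expected_pulls (planted (2 * K) H) A < ennreal (2 * real K * ln (1/\<epsilon>))"
    by (auto simp: not_le)
  have K: "0 < real K" using assms(1) by simp
  have "0 < \<epsilon>" using assms(2) K by (smt (verit) divide_pos_pos)
  then have l: "0 < ln (1/\<epsilon>)" using assms(3) by simp
  define L where "L = nat \<lfloor>500 * ln (1/\<epsilon>)\<rfloor>"
  define N where "N = K * (L + 1) div 2"
  have NL: "2 * N \<le> K * (L + 1)"
    unfolding N_def by (rule times_div_less_eq_dividend)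
  have L: "real L \<le> 500 * ln (1/\<epsilon>)" "500 * ln (1/\<epsilon>) < real L + 1"
    unfolding L_def using l by linarith+
  have "K * (L + 1) \<le> 2 * Suc N"
    unfolding N_def by simp
  then have "real (K * (L + 1)) \<le> real (2 * Suc N)"
    by (simp only: of_nat_le_iff)
  moreover have "real K * (500 * ln (1/\<epsilon>)) \<le> real K * (real L + 1)"
    using L K by (intro mult_left_mono) auto
  ultimately have "200 * real K * ln (1/\<epsilon>) \<le> real (Suc N)"
    using K l by (simp add: algebra_simps)
  then have budget: "2 * real K * ln (1/\<epsilon>) / real (Suc N) \<le> 1/100"
    by (simp add: divide_le_eq)
  have "0.9 - 2 * real K * ln (1/\<epsilon>) / real (Suc N)
      \<le> stop_prob (planted (2 * K) H) A (capped_goal (2 * K) K \<epsilon> H) (Suc N) [] + (if K < card H then 1 else 0)"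
    if "H \<subseteq> {..<2 * K}" for H
    using capped_success_ge[where \<epsilon> = \<epsilon> and B = "Suc N", OF that _ pulls[OF that]] success planted_in_family
    by simp
  then have "0.9 - 2 * real K * ln (1/\<epsilon>) / real (Suc N) \<le> posterior_bound K \<epsilon> L + (25/32) ^ K"
    by (rule prior_average_success_le[OF assms(1) NL])
  then show False
    using budget posterior_bound_le_half[OF assms(1-3) L(1)] tail_bound_le_tenth[OF assms(1-3)] by linarith
qed

theorem theorem3:
  shows "\<exists>c0 c1 c2 :: real. c0 > 0 \<and> c1 > 0 \<and> c2 > 0 \<and>
    (\<forall>(K::nat) (\<epsilon>::real) (A::algorithm). K \<ge> 1 \<longrightarrow> c0 / real K \<le> \<epsilon> \<longrightarrow> \<epsilon> \<le> c1 \<longrightarrow>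
       (\<forall>\<theta>\<in>family (2*K). success_prob \<theta> A (eps_top_K \<theta> (2*K) K \<epsilon>) \<ge> 0.9) \<longrightarrow>
       (\<exists>\<theta>\<in>family (2*K).
          expected_pulls \<theta> A \<ge> ennreal (c2 * real (2*K) * ln (1 / \<epsilon>))))"
proof (rule exI[of _ 100000], rule exI[of _ "1/10^12"], rule exI[of _ 1], intro conjI allI impI)
  fix K :: nat and \<epsilon> :: real and A :: algorithm
  assume "K \<ge> 1" "100000 / real K \<le> \<epsilon>" "\<epsilon> \<le> 1/10^12"
    and "\<forall>\<theta>\<in>family (2*K). success_prob \<theta> A (eps_top_K \<theta> (2*K) K \<epsilon>) \<ge> 0.9"
  then obtain H where "expected_pulls (planted (2 * K) H) A \<ge> ennreal (2 * real K * ln (1/\<epsilon>))"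
    using expected_pulls_lower_bound by blast
  then show "\<exists>\<theta>\<in>family (2*K). expected_pulls \<theta> A \<ge> ennreal (1 * real (2*K) * ln (1 / \<epsilon>))"
    using planted_in_family by auto
qed simp_all

end
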